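(* Let $0<q<1/2$, $p=1-q$, $\lambda=q/p$. For each integer $z\ge2$ let $\kappa(z)$ be the unique $\kappa\in(0,+\infty)$ satisfying $$\sum_{j=1}^{z-1}\left(\prod_{i=1}^{j}\left(1-\frac iz\right)\right)\frac{1}{\kappa^j}=\frac{\lambda}{1-\lambda}.$$ Then $$\lim_{z\to+\infty}\kappa(z)=\lambda^{-1}=\frac pq.$$
   Context: The left-hand side is strictly decreasing in $\kappa$ from $+\infty$ to $0$, so $\kappa(z)$ is well defined. $\kappa(z)$ is the unique point where the second derivative in $\kappa$ of the conditional double-spend success probability $P(z,\kappa)=1-Q(z,\kappa zq/p)+(q/p)^ze^{\kappa z(p-q)/p}Q(z,\kappa z)$ changes sign ($Q$ the regularized upper incomplete gamma function). *)

theory Defs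
  imports "HOL-Analysis.Analysis"
begin

definition kappa_lhs :: "nat \<Rightarrow> real \<Rightarrow> real" where
  "kappa_lhs z \<kappa> = (\<Sum>j=1..z-1. (\<Prod>i=1..j. 1 - real i / real z) * (1 / \<kappa> ^ j))"

definition kappa_z :: "real \<Rightarrow> nat \<Rightarrow> real" where
  "kappa_z lam z = (THE \<kappa>. 0 < \<kappa> \<and> kappa_lhs z \<kappa> = lam / (1 - lam))"

end

theory Submission
  imports Defs
begin

text \<open>The left-hand side is strictly decreasing in \<open>\<kappa>\<close>. Its coefficients
  \<open>\<Prod>i=1..j. 1 - i/z\<close> lie in \<open>[0,1]\<close> and tend to \<open>1\<close> as \<open>z \<rightarrow> \<infinity>\<close>, so for
  \<open>\<kappa> > 1\<close> it stays below the geometric series \<open>\<Sum>j\<ge>1. \<kappa>\<^sup>-\<^sup>j = 1/(\<kappa> - 1)\<close>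
  and eventually exceeds every smaller number. At \<open>\<kappa> = 1/\<lambda>\<close> that series is
  \<open>\<lambda>/(1 - \<lambda>)\<close>, so the root \<open>\<kappa>(z)\<close> lies below \<open>1/\<lambda>\<close> for every \<open>z\<close>, and above any
  \<open>k \<in> (1, 1/\<lambda>)\<close> once \<open>z\<close> is large.\<close>

lemma kappa_coeff_bounds:
  assumes "j < z"
  shows kappa_coeff_nonneg: "0 \<le> (\<Prod>i=1..j. 1 - real i / real z)"
    and kappa_coeff_le_1: "(\<Prod>i=1..j. 1 - real i / real z) \<le> 1"
proof -
  have factor: "0 \<le> 1 - real i / real z \<and> 1 - real i / real z \<le> 1" if "i \<in> {1..j}" for i
    using that assms by (auto simp: field_simps)
  show "0 \<le> (\<Prod>i=1..j. 1 - real i / real z)"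
    using factor by (intro prod_nonneg) blast
  show "(\<Prod>i=1..j. 1 - real i / real z) \<le> 1"
    using factor by (intro prod_le_1) blast
qed

lemma kappa_lhs_strict_antimono:
  assumes "2 \<le> z" and "0 < x" and "x < y"
  shows "kappa_lhs z y < kappa_lhs z x"
  unfolding kappa_lhs_def
proof (rule sum_strict_mono_ex1)
  show "\<forall>j\<in>{1..z-1}. (\<Prod>i=1..j. 1 - real i / real z) * (1 / y ^ j)
                         \<le> (\<Prod>i=1..j. 1 - real i / real z) * (1 / x ^ j)"
  proof
    fix j assume "j \<in> {1..z-1}"
    have "1 / y ^ j \<le> 1 / x ^ j"
      using assms by (intro divide_left_mono power_mono) auto
    moreover from \<open>j \<in> {1..z-1}\<close> have "0 \<le> (\<Prod>i=1..j. 1 - real i / real z)"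
      by (intro kappa_coeff_nonneg) auto
    ultimately show "(\<Prod>i=1..j. 1 - real i / real z) * (1 / y ^ j)
                     \<le> (\<Prod>i=1..j. 1 - real i / real z) * (1 / x ^ j)"
      by (rule mult_left_mono)
  qed
  have "(1 - 1 / real z) * (1 / y) < (1 - 1 / real z) * (1 / x)"
    using assms by (intro mult_strict_left_mono) (auto simp: field_simps)
  then show "\<exists>j\<in>{1..z-1}. (\<Prod>i=1..j. 1 - real i / real z) * (1 / y ^ j)
                         < (\<Prod>i=1..j. 1 - real i / real z) * (1 / x ^ j)"
    using assms(1) by (intro bexI[of _ 1]) auto
qed simp

lemma continuous_on_kappa_lhs: "0 < a \<Longrightarrow> continuous_on {a..b} (kappa_lhs z)"
  unfolding kappa_lhs_def by (intro continuous_intros) auto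

lemma sum_power_from_1:
  fixes x :: real
  assumes "x \<noteq> 1"
  shows "(\<Sum>j=1..n. x ^ j) = (x - x ^ Suc n) / (1 - x)"
  using assms by (subst sum_gp) auto

lemma kappa_lhs_less_geometric:
  assumes "1 < k"
  shows "kappa_lhs z k < 1 / (k - 1)"
proof -
  define x where "x = 1 / k"
  have x: "0 < x" "x < 1" using assms by (auto simp: x_def)
  have "kappa_lhs z k \<le> (\<Sum>j=1..z-1. 1 * (1 / k ^ j))"
    unfolding kappa_lhs_def using assms kappa_coeff_le_1
    by (intro sum_mono mult_right_mono) auto
  also have "\<dots> = (\<Sum>j=1..z-1. x ^ j)"
    by (simp add: x_def power_one_over)
  also have "\<dots> = (x - x ^ Suc (z - 1)) / (1 - x)"
    using x by (intro sum_power_from_1) simp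
  also have "\<dots> < x / (1 - x)"
    using x by (intro divide_strict_right_mono) auto
  also have "\<dots> = 1 / (k - 1)"
    using assms by (simp add: x_def field_simps)
  finally show ?thesis .
qed

lemma kappa_lhs_eventually_greater:
  assumes "1 < k" and "c < 1 / (k - 1)"
  shows "eventually (\<lambda>z. c < kappa_lhs z k) sequentially"
proof -
  define x where "x = 1 / k"
  have x: "0 < x" "x < 1" using assms by (auto simp: x_def)
  have "(\<lambda>n. (x - x ^ Suc n) / (1 - x)) \<longlonglongrightarrow> (x - 0) / (1 - x)"
    using x by (intro tendsto_intros LIMSEQ_power_zero[THEN LIMSEQ_Suc]) auto
  moreover have "c < (x - 0) / (1 - x)"
    using assms by (simp add: x_def field_simps)
  ultimately have "eventually (\<lambda>n. c < (x - x ^ Suc n) / (1 - x)) sequentially"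
    by (rule order_tendstoD(1))
  then obtain N where "c < (x - x ^ Suc N) / (1 - x)"
    unfolding eventually_sequentially by blast
  then have N: "c < (\<Sum>j=1..N. x ^ j)"
    using x by (subst sum_power_from_1) auto
  define partial where
    "partial z = (\<Sum>j=1..N. (\<Prod>i=1..j. 1 - real i / real z) * (1 / k ^ j))" for z
  have "partial \<longlonglongrightarrow> (\<Sum>j=1..N. (\<Prod>i=1..j. 1 - 0) * (1 / k ^ j))"
    unfolding partial_def by (intro tendsto_intros lim_const_over_n)
  then have partial_greater: "eventually (\<lambda>z. c < partial z) sequentially"
    using N by (intro order_tendstoD(1)) (simp_all add: x_def power_one_over)
  have partial_le: "partial z \<le> kappa_lhs z k" if "N < z" for z
    unfolding partial_def kappa_lhs_def
    using that assms kappa_coeff_nonneg by (intro sum_mono2) auto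
  show ?thesis
    using partial_greater eventually_gt_at_top[of N]
    by eventually_elim (use partial_le in force)
qed

lemma kappa_z_eqI:
  assumes "2 \<le> z" and "0 < t" and "kappa_lhs z t = lam / (1 - lam)"
  shows "kappa_z lam z = t"
  unfolding kappa_z_def
proof (rule the_equality)
  show "0 < t \<and> kappa_lhs z t = lam / (1 - lam)" using assms by simp
  fix s assume "0 < s \<and> kappa_lhs z s = lam / (1 - lam)"
  then show "s = t"
    using assms kappa_lhs_strict_antimono[OF assms(1)]
    by (metis linorder_neqE_linordered_idom order.irrefl)
qed

lemma kappa_z_eventually_between:
  assumes "0 < lam" "lam < 1" and "1 < k" "k < 1 / lam"
  shows "eventually (\<lambda>z. k < kappa_z lam z \<and> kappa_z lam z < 1 / lam) sequentially"
proof -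
  have series_at_root: "1 / (1 / lam - 1) = lam / (1 - lam)"
    using assms(1,2) by (simp add: field_simps)
  have "lam / (1 - lam) < 1 / (k - 1)"
    using assms by (simp add: field_simps)
  from kappa_lhs_eventually_greater[OF assms(3) this] eventually_ge_at_top[of 2]
  show ?thesis
  proof eventually_elim
    case (elim z)
    have above: "kappa_lhs z (1 / lam) < lam / (1 - lam)"
      using kappa_lhs_less_geometric[of "1 / lam" z] assms series_at_root by simp
    obtain t where t: "k \<le> t" "t \<le> 1 / lam" "kappa_lhs z t = lam / (1 - lam)"
      using IVT2'[of "kappa_lhs z" "1 / lam" _ k, OF less_imp_le[OF above] less_imp_le[OF elim(1)]]
        continuous_on_kappa_lhs[of k] assms
      by auto
    have "kappa_z lam z = t"
      using t assms by (intro kappa_z_eqI elim) auto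
    moreover have "t \<noteq> k" "t \<noteq> 1 / lam"
      using t elim above by auto
    ultimately show ?case using t by auto
  qed
qed

lemma kappa_z_tendsto:
  assumes "0 < lam" "lam < 1"
  shows "kappa_z lam \<longlonglongrightarrow> 1 / lam"
proof (rule order_tendstoI)
  have "1 < 1 / lam" using assms by simp
  fix a assume "a < 1 / lam"
  with \<open>1 < 1 / lam\<close> obtain k where "max a 1 < k" "k < 1 / lam"
    using dense by (metis max_less_iff_conj)
  with kappa_z_eventually_between[OF assms, of k]
  show "eventually (\<lambda>z. a < kappa_z lam z) sequentially"
    by (auto elim: eventually_mono)
next
  have "1 < 1 / lam" using assms by simp
  then obtain k where "1 < k" "k < 1 / lam" using dense by blast
  fix a assume "1 / lam < a"
  with kappa_z_eventually_between[OF assms \<open>1 < k\<close> \<open>k < 1 / lam\<close>]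
  show "eventually (\<lambda>z. kappa_z lam z < a) sequentially"
    by (auto elim: eventually_mono)
qed

theorem mainTheorem12:
  fixes q p lam :: real
  assumes "0 < q" and "q < 1/2" and "p = 1 - q" and "lam = q / p"
  shows "((\<lambda>z. kappa_z lam z) \<longlongrightarrow> p / q) sequentially"
proof -
  have "q < p" "0 < p" using assms by auto
  then have "0 < lam" "lam < 1" "p / q = 1 / lam"
    using assms(1,4) by simp_all
  then show ?thesis using kappa_z_tendsto by presburger
qed

end
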